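(* Fix $0<R<1$, $\varepsilon>0$ with $1-R-\varepsilon>0$, a positive integer $\ell$, and let $q$ be a prime power with $q\ge \max\left(\ell^{\frac{8R}{\varepsilon}+6},\ \ell\cdot 2^{4/\varepsilon}\right)$. Let $L:=2\ell/\varepsilon$ and let $\mathcal{C}\subseteq \mathbb{F}_q^n$ be a random linear code of rate $R$. Then with probability at least $1-q^{-\varepsilon n L/8}$, for every choice of input lists $S_1,\dots,S_n\subseteq\mathbb{F}_q$ each of size $\ell$, every linearly independent subset of $\mathcal{C}\cap B(1-R-\varepsilon, S_1\times\cdots\times S_n)$ has size less than $2\ell/\varepsilon$.
   Context: A random linear code of rate $R$ in $\mathbb{F}_q^n$ is the column span of a generator matrix $\mathbf{G}\in\mathbb{F}_q^{n\times Rn}$ whose entries are independent and uniformly random elements of $\mathbb{F}_q$ (here $Rn$ is an integer). For sets $S_1,\dots,S_n\subseteq\mathbb{F}_q$ of size $\ell$ and $\rho\in(0,1)$, the $\rho$-radius $\ell$-list-recovery ball $B(\rho,S_1\times\cdots\times S_n)$ is the set of $x\in\mathbb{F}_q^n$ such that $|\{i\in[n]: x[i]\in S_i\}|\ge(1-\rho)n$. *)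

theory Defs
  imports "HOL-Analysis.Analysis"
begin

definition code_of :: "'a::field ^ 'k ^ 'n \<Rightarrow> ('a ^ 'n) set" where
  "code_of G = vec.span {column j G | j. True}"

definition lr_ball :: "real \<Rightarrow> ('n::finite \<Rightarrow> 'a set) \<Rightarrow> ('a ^ 'n) set" where
  "lr_ball \<rho> S = {x. real (card {i. x $ i \<in> S i}) \<ge> (1 - \<rho>) * real CARD('n)}"

definition prob_gen :: "('a::finite ^ 'k::finite ^ 'n::finite \<Rightarrow> bool) \<Rightarrow> real" where
  "prob_gen P = real (card {G. P G}) / real (card (UNIV :: ('a ^ 'k ^ 'n) set))"

end

theory Submission
  imports Defs
begin

(* Let m = ceil(2 l / eps) and rho = 1 - R - eps. A bad code contains m independent vectors of some
  ball B(rho, S). For a fixed independent set A, a matrix whose column span contains A maps one of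
  the q^(k |A|) choices Y of preimages onto A, and for each Y these matrices form a coset of the
  kernel of G |-> (G y) for y in Y, of size q^(kn) / q^(n |A|). Hence A lies in the code with
  probability at most q^((k - n) |A|). The ball has at most (2 l^(1 - rho) q^rho)^n points and there
  are at most q^(l n) choices of S, so the union bound gives
  q^(l n) ((2 l^(R + eps) q^(1 - R - eps))^n q^(k - n))^m. The size of q forces
  2 l^(R + eps) <= q^(3 eps / 8), which makes this at most q^(l n - 5 eps n m / 8) <= q^(-l n / 4). *)

lemma card_UN_le_uniform:
  assumes "finite I" and "\<And>i. i \<in> I \<Longrightarrow> real (card (A i)) \<le> c"
  shows "real (card (\<Union>i\<in>I. A i)) \<le> real (card I) * c"
proof -
  have "real (card (\<Union>i\<in>I. A i)) \<le> (\<Sum>i\<in>I. real (card (A i)))"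
    using card_UN_le[OF assms(1), of A] by (simp flip: of_nat_sum)
  also have "\<dots> \<le> real (card I) * c"
    by (rule sum_bounded_above) (rule assms(2))
  finally show ?thesis .
qed

lemma choose_le_power: "n choose k \<le> n ^ k"
  by (cases "k \<le> n") (simp_all add: binomial_le_pow binomial_eq_0)

lemma prob_gen_mono:
  assumes "\<And>G. P G \<Longrightarrow> Q G"
  shows "prob_gen P \<le> prob_gen Q"
  unfolding prob_gen_def using assms by (intro divide_right_mono) (auto intro: card_mono)

lemma prob_gen_not:
  fixes P :: "'a::finite ^ 'k::finite ^ 'n::finite \<Rightarrow> bool"
  shows "prob_gen (\<lambda>G. \<not> P G) = 1 - prob_gen P"
proof -
  let ?N = "real (card (UNIV :: ('a ^ 'k ^ 'n) set))"
  have "{G. \<not> P G} \<union> {G. P G} = UNIV" by blast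
  moreover have "card {G. \<not> P G} + card {G. P G} = card ({G. \<not> P G} \<union> {G. P G})"
    by (rule card_Un_disjoint[symmetric]) auto
  ultimately have "card {G. \<not> P G} + card {G. P G} = card (UNIV :: ('a ^ 'k ^ 'n) set)"
    by (simp only:)
  then have "real (card {G. \<not> P G}) = ?N - real (card {G. P G})"
    by (metis add_diff_cancel_right' of_nat_add)
  then show ?thesis
    unfolding prob_gen_def by (simp add: diff_divide_distrib)
qed

lemma prob_gen_ge_if_failure_le:
  assumes "prob_gen Q \<le> c" and "\<And>G. \<not> P G \<Longrightarrow> Q G"
  shows "1 - c \<le> prob_gen P"
  using prob_gen_mono[of "\<lambda>G. \<not> P G" Q] prob_gen_not[of P] assms by simp

lemma prob_gen_union_bound:
  fixes P :: "'i \<Rightarrow> 'a::finite ^ 'k::finite ^ 'n::finite \<Rightarrow> bool"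
  assumes "finite I" and "\<And>i. i \<in> I \<Longrightarrow> prob_gen (P i) \<le> c"
  shows "prob_gen (\<lambda>G. \<exists>i\<in>I. P i G) \<le> real (card I) * c"
proof -
  let ?N = "real (card (UNIV :: ('a ^ 'k ^ 'n) set))"
  have "{G. \<exists>i\<in>I. P i G} = (\<Union>i\<in>I. {G. P i G})" by blast
  moreover have "real (card {G. P i G}) \<le> c * ?N" if "i \<in> I" for i
    using assms(2)[OF that] by (simp add: prob_gen_def divide_le_eq)
  ultimately have "real (card {G. \<exists>i\<in>I. P i G}) \<le> real (card I) * (c * ?N)"
    using card_UN_le_uniform[OF assms(1), of "\<lambda>i. {G. P i G}"] by simp
  then show ?thesis
    unfolding prob_gen_def by (simp add: divide_le_eq)
qed

lemma code_of_subset_range: "code_of G \<subseteq> range ((*v) G)"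
  unfolding code_of_def
proof (rule vec.span_minimal)
  have "column j G = G *v axis j 1" for j
    by (simp add: vec_eq_iff column_def matrix_vector_mult_def axis_def if_distrib cong: if_cong)
  then show "{column j G |j. True} \<subseteq> range ((*v) G)" by auto
  show "vec.subspace (range ((*v) G))"
    by (rule vec.subspace_image[OF vec.subspace_UNIV])
qed

lemma independent_if_matrix_image_independent:
  fixes G :: "'a::field ^ 'k::finite ^ 'n::finite"
  assumes "vec.independent ((*v) G ` S)" and "inj_on ((*v) G) S"
  shows "vec.independent S"
proof
  assume "vec.dependent S"
  then obtain a where "a \<in> S" and "a \<in> vec.span (S - {a})" unfolding vec.dependent_def by blast
  then have "G *v a \<in> vec.span ((*v) G ` (S - {a}))" by (simp add: vec.span_image)
  moreover have "(*v) G ` (S - {a}) = (*v) G ` S - {G *v a}"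
    using assms(2) \<open>a \<in> S\<close> by (auto simp: inj_on_def)
  ultimately have "G *v a \<in> vec.span ((*v) G ` S - {G *v a})" by simp
  then have "vec.dependent ((*v) G ` S)"
    unfolding vec.dependent_def using \<open>a \<in> S\<close> by (intro bexI[of _ "G *v a"]) auto
  with assms(1) show False by simp
qed

lemma matrix_interpolation_exists:
  fixes X :: "('a::field ^ 'k::finite) set" and t :: "'a ^ 'k \<Rightarrow> 'a ^ 'n::finite"
  assumes "vec.independent X"
  obtains G :: "'a ^ 'k ^ 'n" where "\<And>x. x \<in> X \<Longrightarrow> G *v x = t x"
proof -
  obtain g where "Vector_Spaces.linear (*s) (*s) g" and "\<forall>x\<in>X. g x = t x"
    using vec.linear_independent_extend[OF assms] by blast
  then show ?thesis by (intro that[of "matrix g"]) (simp add: matrix_works)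
qed

lemma card_matrix_interpolation:
  fixes X :: "('a::{finite,field} ^ 'k::finite) set" and t :: "'a ^ 'k \<Rightarrow> 'a ^ 'n::finite"
  assumes X: "vec.independent X"
  shows "card {G :: 'a ^ 'k ^ 'n. \<forall>x\<in>X. G *v x = t x} * CARD('a ^ 'n) ^ card X
    = CARD('a ^ 'k ^ 'n)"
proof -
  define fiber where "fiber u = {G :: 'a ^ 'k ^ 'n. \<forall>x\<in>X. G *v x = u x}" for u
  define targets where "targets = PiE X (\<lambda>_. UNIV :: ('a ^ 'n) set)"
  have fiber_card: "card (fiber u) = card (fiber t)" for u
  proof -
    obtain Gu Gt :: "'a ^ 'k ^ 'n"
      where "\<And>x. x \<in> X \<Longrightarrow> Gu *v x = u x" and "\<And>x. x \<in> X \<Longrightarrow> Gt *v x = t x"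
      using matrix_interpolation_exists[OF X] by metis
    then have "bij_betw (\<lambda>G. G - Gu + Gt) (fiber u) (fiber t)"
      by (intro bij_betwI[where g = "\<lambda>G. G - Gt + Gu"])
        (auto simp: fiber_def matrix_vector_mult_add_rdistrib matrix_vector_mult_diff_rdistrib)
    then show ?thesis by (rule bij_betw_same_card)
  qed
  have cover: "(\<Union>u\<in>targets. fiber u) = UNIV"
    by (auto simp: targets_def fiber_def intro!: bexI[of _ "restrict ((*v) _) X"])
  have "fiber u \<inter> fiber v = {}" if "u \<in> targets" "v \<in> targets" "u \<noteq> v" for u v
    using that PiE_ext[of u X _ v] by (auto simp: targets_def fiber_def)
  then have "card (\<Union>u\<in>targets. fiber u) = (\<Sum>u\<in>targets. card (fiber u))"
    by (intro card_UN_disjoint) (auto simp: targets_def)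
  then have "CARD('a ^ 'k ^ 'n) = (\<Sum>u\<in>targets. card (fiber u))"
    by (simp only: cover)
  also have "\<dots> = (\<Sum>u\<in>targets. card (fiber t))" by (rule sum.cong[OF refl fiber_card])
  also have "\<dots> = card targets * card (fiber t)" by simp
  also have "card targets = CARD('a ^ 'n) ^ card X" by (simp add: targets_def card_PiE)
  finally show ?thesis by (simp add: fiber_def)
qed

lemma card_matrices_inverting_le:
  fixes A :: "('a::{finite,field} ^ 'n::finite) set" and Y :: "'a ^ 'n \<Rightarrow> 'a ^ 'k::finite"
  assumes A: "vec.independent A"
  shows "real (card {G :: 'a ^ 'k ^ 'n. \<forall>a\<in>A. G *v Y a = a})
    \<le> real CARD('a ^ 'k ^ 'n) / real CARD('a ^ 'n) ^ card A"
proof -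
  define fiber where "fiber = {G :: 'a ^ 'k ^ 'n. \<forall>a\<in>A. G *v Y a = a}"
  have "real (card fiber) \<le> real CARD('a ^ 'k ^ 'n) / real CARD('a ^ 'n) ^ card A"
  proof (cases "fiber = {}")
    case False
    then obtain G where G: "\<And>a. a \<in> A \<Longrightarrow> G *v Y a = a" by (auto simp: fiber_def)
    then have inj: "inj_on Y A" by (metis inj_onI)
    have indep: "vec.independent (Y ` A)"
    proof (rule independent_if_matrix_image_independent)
      have "(*v) G ` Y ` A = A" using G by force
      then show "vec.independent ((*v) G ` Y ` A)" using A by simp
      show "inj_on ((*v) G) (Y ` A)" using G by (auto simp: inj_on_def)
    qed
    have "fiber = {G. \<forall>x\<in>Y ` A. G *v x = the_inv_into A Y x}"
      using inj by (auto simp: fiber_def the_inv_into_f_f)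
    then have "card fiber * CARD('a ^ 'n) ^ card (Y ` A) = CARD('a ^ 'k ^ 'n)"
      using card_matrix_interpolation[OF indep] by (simp only:)
    then have "real (card fiber) * real CARD('a ^ 'n) ^ card A = real CARD('a ^ 'k ^ 'n)"
      unfolding card_image[OF inj] by (metis of_nat_mult of_nat_power)
    then show ?thesis by (simp add: pos_le_divide_eq)
  qed simp
  then show ?thesis by (simp only: fiber_def)
qed

lemma prob_gen_independent_subset_code:
  fixes A :: "('a::{finite,field} ^ 'n::finite) set"
  assumes A: "vec.independent A"
  shows "prob_gen (\<lambda>G :: 'a ^ 'k::finite ^ 'n. A \<subseteq> code_of G)
    \<le> (real CARD('a) ^ CARD('k) / real CARD('a) ^ CARD('n)) ^ card A"
proof -
  let ?E = "{G :: 'a ^ 'k ^ 'n. A \<subseteq> code_of G}"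
  define N where "N = real CARD('a ^ 'k ^ 'n)"
  define fiber where "fiber Y = {G :: 'a ^ 'k ^ 'n. \<forall>a\<in>A. G *v Y a = a}" for Y
  define preimages where "preimages = PiE A (\<lambda>_. UNIV :: ('a ^ 'k) set)"
  have covered: "?E \<subseteq> (\<Union>Y\<in>preimages. fiber Y)"
  proof
    fix G assume "G \<in> ?E"
    then have "\<forall>a\<in>A. \<exists>y. G *v y = a" using code_of_subset_range[of G] by blast
    then obtain Y where "\<forall>a\<in>A. G *v Y a = a" by metis
    then show "G \<in> (\<Union>Y\<in>preimages. fiber Y)"
      by (intro UN_I[of "restrict Y A"]) (auto simp: preimages_def fiber_def)
  qed
  have "real (card ?E) \<le> real (card (\<Union>Y\<in>preimages. fiber Y))"
    using card_mono[OF finite covered] by simp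
  also have "\<dots> \<le> real (card preimages) * (N / real CARD('a ^ 'n) ^ card A)"
    unfolding fiber_def N_def
    by (rule card_UN_le_uniform[OF _ card_matrices_inverting_le[OF A]]) (simp add: preimages_def)
  also have "card preimages = CARD('a ^ 'k) ^ card A" by (simp add: preimages_def card_PiE)
  finally have "real (card ?E) / N \<le> (real CARD('a ^ 'k) / real CARD('a ^ 'n)) ^ card A"
    unfolding N_def by (simp add: divide_le_eq power_divide)
  then show ?thesis
    unfolding prob_gen_def N_def by simp
qed

lemma card_box:
  fixes S :: "'n::finite \<Rightarrow> 'a::finite set"
  assumes "\<And>i. card (S i) = l"
  shows "card {x :: 'a ^ 'n. \<forall>i\<in>T. x $ i \<in> S i}
    = l ^ card T * CARD('a) ^ (CARD('n) - card T)"
proof -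
  define C where "C i = (if i \<in> T then S i else UNIV)" for i
  have "bij_betw vec_nth {x :: 'a ^ 'n. \<forall>i\<in>T. x $ i \<in> S i} (PiE UNIV C)"
    by (rule bij_betwI[where g = vec_lambda]) (auto simp: PiE_UNIV_domain C_def Pi_def)
  then have "card {x :: 'a ^ 'n. \<forall>i\<in>T. x $ i \<in> S i} = (\<Prod>i\<in>UNIV. card (C i))"
    by (simp add: bij_betw_same_card card_PiE)
  also have "\<dots> = (\<Prod>i\<in>UNIV. if i \<in> T then l else CARD('a))"
    by (rule prod.cong) (auto simp: C_def assms)
  also have "\<dots> = l ^ card T * CARD('a) ^ (CARD('n) - card T)"
    by (simp add: prod.If_cases Compl_eq_Diff_UNIV card_Diff_subset)
  finally show ?thesis .
qed

lemma card_box_le: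
  fixes S :: "'n::finite \<Rightarrow> 'a::finite set" and \<rho> :: real
  assumes S: "\<And>i. card (S i) = l" and "l > 0" and T: "(1 - \<rho>) * real CARD('n) \<le> real (card T)"
  shows "real (card {x :: 'a ^ 'n. \<forall>i\<in>T. x $ i \<in> S i})
    \<le> (real l powr (1 - \<rho>) * real CARD('a) powr \<rho>) ^ CARD('n)"
proof -
  let ?n = "CARD('n)" and ?q = "real CARD('a)"
  have "l \<le> CARD('a)" using S by (metis card_mono finite subset_UNIV)
  have "card T \<le> ?n" by (simp add: card_mono)
  have "real (card {x :: 'a ^ 'n. \<forall>i\<in>T. x $ i \<in> S i}) = real l ^ card T * ?q ^ (?n - card T)"
    unfolding card_box[OF S] by simp
  also have "\<dots> = ?q ^ ?n * (real l / ?q) powr real (card T)"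
    using \<open>card T \<le> ?n\<close> \<open>l > 0\<close> by (simp add: powr_realpow power_divide power_diff field_simps)
  also have "\<dots> \<le> ?q ^ ?n * (real l / ?q) powr ((1 - \<rho>) * real ?n)"
    using T \<open>l \<le> CARD('a)\<close> \<open>l > 0\<close> by (intro mult_left_mono powr_mono') auto
  also have "\<dots> = real l powr ((1 - \<rho>) * ?n) * (?q powr real ?n / ?q powr ((1 - \<rho>) * ?n))"
    using \<open>l > 0\<close> by (simp add: powr_divide powr_realpow)
  also have "\<dots> = real l powr ((1 - \<rho>) * ?n) * ?q powr (\<rho> * ?n)"
    by (simp add: powr_diff[symmetric] algebra_simps)
  also have "\<dots> = (real l powr (1 - \<rho>) * ?q powr \<rho>) ^ ?n"
    using \<open>l > 0\<close> by (simp add: powr_realpow[symmetric] powr_mult powr_powr)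
  finally show ?thesis .
qed

lemma card_lr_ball_le:
  fixes S :: "'n::finite \<Rightarrow> 'a::finite set" and \<rho> :: real
  assumes S: "\<And>i. card (S i) = l" and "l > 0"
  shows "real (card (lr_ball \<rho> S))
    \<le> (2 * real l powr (1 - \<rho>) * real CARD('a) powr \<rho>) ^ CARD('n)"
proof -
  let ?box_bound = "(real l powr (1 - \<rho>) * real CARD('a) powr \<rho>) ^ CARD('n)"
  define large where "large = {T :: 'n set. (1 - \<rho>) * real CARD('n) \<le> real (card T)}"
  define box where "box T = {x :: 'a ^ 'n. \<forall>i\<in>T. x $ i \<in> S i}" for T
  have "lr_ball \<rho> S \<subseteq> (\<Union>T\<in>large. box T)"
    unfolding lr_ball_def large_def box_def by (auto intro!: bexI[of _ "{i. _ $ i \<in> S i}"])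
  then have "real (card (lr_ball \<rho> S)) \<le> real (card (\<Union>T\<in>large. box T))"
    by (simp add: card_mono)
  also have "\<dots> \<le> real (card large) * ?box_bound"
    unfolding box_def
    by (rule card_UN_le_uniform) (simp_all add: large_def card_box_le[OF S \<open>l > 0\<close>])
  also have "\<dots> \<le> 2 ^ CARD('n) * ?box_bound"
  proof (rule mult_right_mono)
    have "card large \<le> card (Pow (UNIV :: 'n set))" by (rule card_mono) auto
    then show "real (card large) \<le> 2 ^ CARD('n)" by (simp add: card_Pow)
  qed simp
  finally show ?thesis by (simp add: power_mult_distrib mult.assoc)
qed

lemma card_lists_of_size:
  "card {S :: 'n::finite \<Rightarrow> 'a::finite set. \<forall>i. card (S i) = l} = (CARD('a) choose l) ^ CARD('n)"
proof -
  have "{S :: 'n \<Rightarrow> 'a set. \<forall>i. card (S i) = l} = PiE UNIV (\<lambda>_. {T. T \<subseteq> UNIV \<and> card T = l})"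
    by (auto simp: PiE_UNIV_domain)
  then show ?thesis using n_subsets[of "UNIV :: 'a set" l] by (simp add: card_PiE)
qed

lemma prob_gen_independent_subset_of_ball_in_code_le:
  fixes S :: "'n::finite \<Rightarrow> 'a::{finite,field} set" and \<rho> :: real
  assumes S: "\<And>i. card (S i) = l" and "l > 0"
  shows "prob_gen (\<lambda>G :: 'a ^ 'k::finite ^ 'n.
      \<exists>A \<in> {A. A \<subseteq> lr_ball \<rho> S \<and> vec.independent A \<and> card A = m}. A \<subseteq> code_of G)
    \<le> ((2 * real l powr (1 - \<rho>) * real CARD('a) powr \<rho>) ^ CARD('n)
         * (real CARD('a) ^ CARD('k) / real CARD('a) ^ CARD('n))) ^ m"
proof -
  let ?b = "(2 * real l powr (1 - \<rho>) * real CARD('a) powr \<rho>) ^ CARD('n)"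
  let ?p = "real CARD('a) ^ CARD('k) / real CARD('a) ^ CARD('n)"
  define candidates where "candidates = {A. A \<subseteq> lr_ball \<rho> S \<and> vec.independent A \<and> card A = m}"
  have "card candidates \<le> card {A. A \<subseteq> lr_ball \<rho> S \<and> card A = m}"
    unfolding candidates_def by (intro card_mono finite) blast
  also have "\<dots> \<le> card (lr_ball \<rho> S) ^ m"
    by (simp add: n_subsets choose_le_power)
  finally have "real (card candidates) \<le> real (card (lr_ball \<rho> S)) ^ m"
    by (metis of_nat_le_iff of_nat_power)
  also have "\<dots> \<le> ?b ^ m"
    by (intro power_mono card_lr_ball_le[OF S \<open>l > 0\<close>]) simp
  finally have candidates_card: "real (card candidates) \<le> ?b ^ m" .
  have "prob_gen (\<lambda>G :: 'a ^ 'k ^ 'n. \<exists>A \<in> candidates. A \<subseteq> code_of G)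
      \<le> real (card candidates) * ?p ^ m"
  proof (rule prob_gen_union_bound[OF finite])
    fix A assume "A \<in> candidates"
    then show "prob_gen (\<lambda>G :: 'a ^ 'k ^ 'n. A \<subseteq> code_of G) \<le> ?p ^ m"
      using prob_gen_independent_subset_code[of A] by (simp add: candidates_def)
  qed
  also have "\<dots> \<le> ?b ^ m * ?p ^ m"
    using candidates_card by (rule mult_right_mono) simp
  finally show ?thesis unfolding candidates_def by (simp only: power_mult_distrib)
qed

lemma prob_gen_large_independent_in_ball_le:
  fixes \<rho> :: real and l m :: nat
  assumes "l > 0"
  shows "prob_gen (\<lambda>G :: 'a::{finite,field} ^ 'k::finite ^ 'n::finite. \<exists>S. (\<forall>i. card (S i) = l) \<and>
      (\<exists>A. A \<subseteq> code_of G \<inter> lr_ball \<rho> S \<and> vec.independent A \<and> m \<le> card A))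
    \<le> real CARD('a) ^ (l * CARD('n)) * ((2 * real l powr (1 - \<rho>) * real CARD('a) powr \<rho>) ^ CARD('n)
         * (real CARD('a) ^ CARD('k) / real CARD('a) ^ CARD('n))) ^ m"
    (is "prob_gen ?bad \<le> _ * ?bound")
proof -
  define lists where "lists = {S :: 'n \<Rightarrow> 'a set. \<forall>i. card (S i) = l}"
  define candidates where
    "candidates (S :: 'n \<Rightarrow> 'a set) = {A. A \<subseteq> lr_ball \<rho> S \<and> vec.independent A \<and> card A = m}" for S
  have "prob_gen ?bad \<le> prob_gen (\<lambda>G :: 'a ^ 'k ^ 'n. \<exists>S\<in>lists. \<exists>A\<in>candidates S. A \<subseteq> code_of G)"
  proof (rule prob_gen_mono, elim exE conjE)
    fix G :: "'a ^ 'k ^ 'n" and S A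
    assume S: "\<forall>i. card (S i) = l"
      and A: "A \<subseteq> code_of G \<inter> lr_ball \<rho> S" "vec.independent A" "m \<le> card A"
    obtain B where "B \<subseteq> A" "card B = m"
      using obtain_subset_with_card_n[OF \<open>m \<le> card A\<close>] by metis
    moreover have "vec.independent B" using vec.independent_mono[OF A(2) \<open>B \<subseteq> A\<close>] .
    ultimately have "S \<in> lists" "B \<in> candidates S" "B \<subseteq> code_of G"
      using A S by (auto simp: lists_def candidates_def)
    then show "\<exists>S\<in>lists. \<exists>A\<in>candidates S. A \<subseteq> code_of G" by blast
  qed
  also have "\<dots> \<le> real (card lists) * ?bound"
  proof (rule prob_gen_union_bound[OF finite])
    fix S assume "S \<in> lists"
    then have "\<And>i. card (S i) = l" by (simp add: lists_def)
    then show "prob_gen (\<lambda>G :: 'a ^ 'k ^ 'n. \<exists>A\<in>candidates S. A \<subseteq> code_of G) \<le> ?bound"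
      unfolding candidates_def by (rule prob_gen_independent_subset_of_ball_in_code_le[OF _ \<open>l > 0\<close>])
  qed
  also have "\<dots> \<le> real CARD('a) ^ (l * CARD('n)) * ?bound"
  proof (rule mult_right_mono)
    have "card lists \<le> (CARD('a) ^ l) ^ CARD('n)"
      unfolding lists_def card_lists_of_size by (intro power_mono choose_le_power) simp
    then show "real (card lists) \<le> real CARD('a) ^ (l * CARD('n))"
      by (metis of_nat_le_iff of_nat_power power_mult)
  qed simp
  finally show ?thesis .
qed

lemma field_size_powr_bound:
  fixes q l R \<epsilon> :: real
  assumes q: "q \<ge> max (l powr (8 * R / \<epsilon> + 6)) (l * 2 powr (4 / \<epsilon>))"
    and l: "l \<ge> 1" and \<epsilon>: "\<epsilon> > 0"
  shows "2 * l powr (R + \<epsilon>) \<le> q powr (3 * \<epsilon> / 8)"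
proof -
  have "l powr (\<epsilon> / 4) * 2 = (l * 2 powr (4 / \<epsilon>)) powr (\<epsilon> / 4)"
    using l \<epsilon> by (simp add: powr_mult powr_powr)
  also have "\<dots> \<le> q powr (\<epsilon> / 4)"
    using q l \<epsilon> by (intro powr_mono2) auto
  finally have small: "l powr (\<epsilon> / 4) * 2 \<le> q powr (\<epsilon> / 4)" .
  have "(8 * R / \<epsilon> + 6) * (\<epsilon> / 8) = R + 3 * \<epsilon> / 4"
    using \<epsilon> by (simp add: field_simps)
  then have "l powr (R + 3 * \<epsilon> / 4) = (l powr (8 * R / \<epsilon> + 6)) powr (\<epsilon> / 8)"
    by (simp only: powr_powr)
  also have "\<dots> \<le> q powr (\<epsilon> / 8)"
    using q l \<epsilon> by (intro powr_mono2) auto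
  finally have large: "l powr (R + 3 * \<epsilon> / 4) \<le> q powr (\<epsilon> / 8)" .
  have "2 * l powr (R + \<epsilon>) = (l powr (\<epsilon> / 4) * 2) * l powr (R + 3 * \<epsilon> / 4)"
    by (simp add: powr_add[symmetric] add.commute)
  also have "\<dots> \<le> q powr (\<epsilon> / 4) * q powr (\<epsilon> / 8)"
    using small large by (intro mult_mono) auto
  also have "\<dots> = q powr (3 * \<epsilon> / 8)" by (simp add: powr_add[symmetric])
  finally show ?thesis .
qed

lemma union_bound_le_field_size_powr:
  fixes q R \<epsilon> \<rho> :: real and l n k m :: nat
  assumes q: "q > 1" and "l > 0" and \<epsilon>: "\<epsilon> > 0" and \<rho>: "\<rho> = 1 - R - \<epsilon>"
    and q_large: "q \<ge> max (real l powr (8 * R / \<epsilon> + 6)) (real l * 2 powr (4 / \<epsilon>))"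
    and k: "real k = R * real n" and m: "2 * real l / \<epsilon> \<le> real m"
  shows "q ^ (l * n) * ((2 * real l powr (1 - \<rho>) * q powr \<rho>) ^ n * (q ^ k / q ^ n)) ^ m
    \<le> q powr (- (\<epsilon> * real n * (2 * real l / \<epsilon>) / 8))"
proof -
  have "1 - \<rho> = R + \<epsilon>" using \<rho> by simp
  then have "2 * real l powr (1 - \<rho>) * q powr \<rho> \<le> q powr (3 * \<epsilon> / 8) * q powr \<rho>"
    using field_size_powr_bound[OF q_large] \<open>l > 0\<close> \<epsilon> by (intro mult_right_mono) auto
  also have "\<dots> = q powr (1 - R - 5 * \<epsilon> / 8)"
    unfolding \<rho> by (simp add: powr_add[symmetric] field_simps)
  finally have coordinate:
    "2 * real l powr (1 - \<rho>) * q powr \<rho> \<le> q powr (1 - R - 5 * \<epsilon> / 8)" .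
  have "(2 * real l powr (1 - \<rho>) * q powr \<rho>) ^ n * (q ^ k / q ^ n)
      \<le> (q powr (1 - R - 5 * \<epsilon> / 8)) ^ n * (q ^ k / q ^ n)"
    using coordinate q by (intro mult_right_mono power_mono) auto
  also have "\<dots> = q powr ((1 - R - 5 * \<epsilon> / 8) * real n) * (q powr real k / q powr real n)"
    using q by (simp add: powr_power powr_realpow mult.commute)
  also have "\<dots> = q powr ((1 - R - 5 * \<epsilon> / 8) * real n + real k - real n)"
    by (simp add: powr_add powr_diff)
  also have "\<dots> = q powr (- (5 * \<epsilon> / 8) * real n)"
    using k by (simp add: algebra_simps)
  finally have vector: "(2 * real l powr (1 - \<rho>) * q powr \<rho>) ^ n * (q ^ k / q ^ n)
      \<le> q powr (- (5 * \<epsilon> / 8) * real n)" .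
  have "q ^ (l * n) * ((2 * real l powr (1 - \<rho>) * q powr \<rho>) ^ n * (q ^ k / q ^ n)) ^ m
      \<le> q ^ (l * n) * (q powr (- (5 * \<epsilon> / 8) * real n)) ^ m"
    using vector q by (intro mult_left_mono power_mono) auto
  also have "\<dots> = q powr (real l * real n - 5 * \<epsilon> / 8 * real n * real m)"
    using q by (simp add: powr_realpow[symmetric] powr_powr powr_diff powr_add[symmetric] algebra_simps)
  also have "\<dots> \<le> q powr (- (\<epsilon> * real n * (2 * real l / \<epsilon>) / 8))"
  proof (rule powr_mono)
    have "real n * (2 * real l) \<le> real n * (\<epsilon> * real m)"
      using m \<epsilon> by (intro mult_left_mono) (auto simp: field_simps)
    then show "real l * real n - 5 * \<epsilon> / 8 * real n * real m
        \<le> - (\<epsilon> * real n * (2 * real l / \<epsilon>) / 8)"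
      using \<epsilon> by (simp add: field_simps)
  qed (use q in simp)
  finally show ?thesis .
qed

theorem lemma3p3:
  fixes R \<epsilon> :: real and l :: nat
  assumes "0 < R" "R < 1" "\<epsilon> > 0" "1 - R - \<epsilon> > 0" "l > 0"
    and "real CARD('k::finite) = R * real CARD('n::finite)"
    and "real CARD('a::{finite,field}) \<ge> max (real l powr (8 * R / \<epsilon> + 6)) (real l * 2 powr (4 / \<epsilon>))"
  shows "prob_gen (\<lambda>G :: 'a ^ 'k ^ 'n.
            \<forall>S :: 'n \<Rightarrow> 'a set. (\<forall>i. card (S i) = l) \<longrightarrow>
              (\<forall>A. A \<subseteq> code_of G \<inter> lr_ball (1 - R - \<epsilon>) S \<and> vec.independent A
                   \<longrightarrow> real (card A) < 2 * real l / \<epsilon>))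
         \<ge> 1 - real CARD('a) powr (- (\<epsilon> * real CARD('n) * (2 * real l / \<epsilon>) / 8))"
proof -
  define m where "m = nat \<lceil>2 * real l / \<epsilon>\<rceil>"
  have "real CARD('a) > 1"
    using card_mono[of UNIV "{0 :: 'a, 1}"] by simp
  then have "prob_gen (\<lambda>G :: 'a ^ 'k ^ 'n. \<exists>S. (\<forall>i. card (S i) = l) \<and>
      (\<exists>A. A \<subseteq> code_of G \<inter> lr_ball (1 - R - \<epsilon>) S \<and> vec.independent A \<and> m \<le> card A))
    \<le> real CARD('a) powr (- (\<epsilon> * real CARD('n) * (2 * real l / \<epsilon>) / 8))"
    by (intro order_trans[OF prob_gen_large_independent_in_ball_le union_bound_le_field_size_powr])
      (use assms in \<open>auto simp: m_def\<close>)
  then show ?thesis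
    by (rule prob_gen_ge_if_failure_le) (auto simp: m_def not_less)
qed

end
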